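(* Let $G$ be a simple nonplanar cubic graph with $n$ vertices. Then there is an infinite family of nonplanar cubic graphs $G_k$ ($k\ge 1$) such that $G_k$ has $6k+n$ vertices and $K'(G_k,3)=2^kK'(G,3)$. Moreover, if $G$ is bipartite, the graphs $G_k$ can be chosen bipartite.
   Context: Graphs are finite; multiple edges allowed, loops not. A proper $3$-edge coloring assigns colors from $\{1,2,3\}$ to edges so that adjacent edges receive different colors. For colors $a\neq b$, an edge-Kempe chain is a connected component of the subgraph of edges colored $a$ or $b$; an edge-Kempe switch interchanges $a$ and $b$ on one chain. $K'(G,3)$ is the number of equivalence classes of proper $3$-edge colorings of $G$ under the equivalence relation generated by edge-Kempe switches. *)

theory Defs
  imports "HOL-Analysis.Analysis"
begin

text \<open>A finite multigraph without loops: vertex set V, edge set E (edge identifiers,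
so parallel edges are allowed), and an endpoint map assigning to each edge a set of
exactly two distinct vertices.\<close>

definition graph :: "'v set \<Rightarrow> 'e set \<Rightarrow> ('e \<Rightarrow> 'v set) \<Rightarrow> bool" where
  "graph V E ends \<longleftrightarrow> finite V \<and> finite E \<and> (\<forall>e\<in>E. ends e \<subseteq> V \<and> card (ends e) = 2)"

definition simple_graph :: "'v set \<Rightarrow> 'e set \<Rightarrow> ('e \<Rightarrow> 'v set) \<Rightarrow> bool" where
  "simple_graph V E ends \<longleftrightarrow> graph V E ends \<and> inj_on ends E"

definition degree :: "'e set \<Rightarrow> ('e \<Rightarrow> 'v set) \<Rightarrow> 'v \<Rightarrow> nat" where
  "degree E ends v = card {e\<in>E. v \<in> ends e}"

definition cubic :: "'v set \<Rightarrow> 'e set \<Rightarrow> ('e \<Rightarrow> 'v set) \<Rightarrow> bool" where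
  "cubic V E ends \<longleftrightarrow> (\<forall>v\<in>V. degree E ends v = 3)"

definition bipartite :: "'v set \<Rightarrow> 'e set \<Rightarrow> ('e \<Rightarrow> 'v set) \<Rightarrow> bool" where
  "bipartite V E ends \<longleftrightarrow> (\<exists>A\<subseteq>V. \<forall>e\<in>E. card (ends e \<inter> A) = 1)"

definition planar :: "'v set \<Rightarrow> 'e set \<Rightarrow> ('e \<Rightarrow> 'v set) \<Rightarrow> bool" where
  "planar V E ends \<longleftrightarrow>
     (\<exists>(f :: 'v \<Rightarrow> complex) (\<gamma> :: 'e \<Rightarrow> real \<Rightarrow> complex).
        inj_on f V \<and>
        (\<forall>e\<in>E. arc (\<gamma> e) \<and> {pathstart (\<gamma> e), pathfinish (\<gamma> e)} = f ` ends e \<and>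
                path_image (\<gamma> e) \<inter> f ` V \<subseteq> f ` ends e) \<and>
        (\<forall>e\<in>E. \<forall>e'\<in>E. e \<noteq> e' \<longrightarrow>
                path_image (\<gamma> e) \<inter> path_image (\<gamma> e') \<subseteq> f ` (ends e \<inter> ends e')))"

definition proper_3_edge_colorings :: "'e set \<Rightarrow> ('e \<Rightarrow> 'v set) \<Rightarrow> ('e \<Rightarrow> nat) set" where
  "proper_3_edge_colorings E ends =
     {c \<in> E \<rightarrow>\<^sub>E {1,2,3}. \<forall>e\<in>E. \<forall>e'\<in>E. e \<noteq> e' \<and> ends e \<inter> ends e' \<noteq> {} \<longrightarrow> c e \<noteq> c e'}"

definition kempe_adj :: "'e set \<Rightarrow> ('e \<Rightarrow> 'v set) \<Rightarrow> ('e \<Rightarrow> nat) \<Rightarrow> nat \<Rightarrow> nat \<Rightarrow> ('e \<times> 'e) set" where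
  "kempe_adj E ends c a b =
     {(e, e'). e \<in> E \<and> e' \<in> E \<and> c e \<in> {a, b} \<and> c e' \<in> {a, b} \<and> ends e \<inter> ends e' \<noteq> {}}"

definition kempe_chain :: "'e set \<Rightarrow> ('e \<Rightarrow> 'v set) \<Rightarrow> ('e \<Rightarrow> nat) \<Rightarrow> nat \<Rightarrow> nat \<Rightarrow> 'e set \<Rightarrow> bool" where
  "kempe_chain E ends c a b K \<longleftrightarrow>
     (\<exists>e\<in>E. c e \<in> {a, b} \<and> K = {e'. (e, e') \<in> (kempe_adj E ends c a b)\<^sup>*})"

definition kempe_switch :: "'e set \<Rightarrow> ('e \<Rightarrow> 'v set) \<Rightarrow> ('e \<Rightarrow> nat) \<Rightarrow> ('e \<Rightarrow> nat) \<Rightarrow> bool" where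
  "kempe_switch E ends c c' \<longleftrightarrow>
     (\<exists>a b K. a \<in> {1,2,3} \<and> b \<in> {1,2,3} \<and> a \<noteq> b \<and> kempe_chain E ends c a b K \<and>
        c' = (\<lambda>e. if e \<in> K then (if c e = a then b else a) else c e))"

text \<open>Equivalence generated by edge-Kempe switches (switches preserve properness and are
self-inverse, so the reflexive-transitive closure from proper colourings suffices).\<close>

definition kempe_equiv :: "'e set \<Rightarrow> ('e \<Rightarrow> 'v set) \<Rightarrow> (('e \<Rightarrow> nat) \<times> ('e \<Rightarrow> nat)) set" where
  "kempe_equiv E ends =
     {(c, c'). c \<in> proper_3_edge_colorings E ends \<and> kempe_switch E ends c c'}\<^sup>*"

definition kempe_classes_3 :: "'e set \<Rightarrow> ('e \<Rightarrow> 'v set) \<Rightarrow> nat" where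
  "kempe_classes_3 E ends = card (proper_3_edge_colorings E ends // kempe_equiv E ends)"

end

theory Submission
  imports Defs
begin

text \<open>Take for \<open>G\<^sub>k\<close> the disjoint union of \<open>G\<close> with \<open>k\<close> copies of \<open>K\<^sub>3\<^sub>,\<^sub>3\<close>. It is
cubic (and bipartite if \<open>G\<close> is), and nonplanar because it contains \<open>G\<close>. A Kempe chain lies in
a single component, so switches act on the components independently and \<open>K'\<close> is multiplicative
under disjoint union. Finally \<open>K'(K\<^sub>3\<^sub>,\<^sub>3, 3) = 2\<close>: the proper colourings of \<open>K\<^sub>3\<^sub>,\<^sub>3\<close> are the
twelve Latin squares of order 3, every two-coloured subgraph is a Hamiltonian 6-cycle, so a switch
just transposes two colours, and the twelve squares form two orbits under colour permutations.\<close>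

section \<open>Counting classes of generated equivalences\<close>

lemma rtrancl_Image_subset:
  assumes "S \<subseteq> P \<times> P" "x \<in> P"
  shows "S\<^sup>* `` {x} \<subseteq> P"
proof
  fix y assume "y \<in> S\<^sup>* `` {x}"
  then have "(x, y) \<in> S\<^sup>*" by simp
  then show "y \<in> P" using assms by (induction rule: rtrancl_induct) auto
qed

lemma quotient_eq_image: "A // R = (\<lambda>x. R `` {x}) ` A"
  unfolding quotient_def by blast

lemma rtrancl_map_prod_Image:
  assumes inj: "inj_on F P" and S: "S \<subseteq> P \<times> P" and x: "x \<in> P"
  shows "(map_prod F F ` S)\<^sup>* `` {F x} = F ` (S\<^sup>* `` {x})"
proof (intro equalityI subsetI)
  fix w assume "w \<in> (map_prod F F ` S)\<^sup>* `` {F x}"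
  then have "(F x, w) \<in> (map_prod F F ` S)\<^sup>*" by simp
  then show "w \<in> F ` (S\<^sup>* `` {x})"
  proof (induction rule: rtrancl_induct)
    case (step v w)
    then obtain y where y: "(x, y) \<in> S\<^sup>*" "v = F y" by blast
    then have "y \<in> P" using rtrancl_Image_subset[OF S x] by blast
    from step obtain y' z where "(y', z) \<in> S" "v = F y'" "w = F z" by auto
    with S inj \<open>y \<in> P\<close> y have "(y, z) \<in> S" by (auto dest: inj_onD)
    with y \<open>w = F z\<close> show ?case by (blast intro: rtrancl_into_rtrancl)
  qed simp
next
  fix w assume "w \<in> F ` (S\<^sup>* `` {x})"
  then obtain y where "(x, y) \<in> S\<^sup>*" "w = F y" by blast
  moreover have "(x, y) \<in> S\<^sup>* \<Longrightarrow> (F x, F y) \<in> (map_prod F F ` S)\<^sup>*" for y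
    by (induction rule: rtrancl_induct) (auto intro: rtrancl_into_rtrancl)
  ultimately show "w \<in> (map_prod F F ` S)\<^sup>* `` {F x}" by simp
qed

lemma card_quotient_rtrancl_bij_betw:
  assumes bij: "bij_betw F P1 P2" and S1: "S1 \<subseteq> P1 \<times> P1" and S2: "S2 \<subseteq> P2 \<times> P2"
    and step_iff: "\<And>x y. x \<in> P1 \<Longrightarrow> y \<in> P1 \<Longrightarrow> (x, y) \<in> S1 \<longleftrightarrow> (F x, F y) \<in> S2"
  shows "card (P1 // S1\<^sup>*) = card (P2 // S2\<^sup>*)"
proof -
  have inj: "inj_on F P1" and P2: "P2 = F ` P1" using bij by (auto simp: bij_betw_def)
  have "S2 = map_prod F F ` S1"
  proof
    show "map_prod F F ` S1 \<subseteq> S2" using S1 step_iff by auto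
    show "S2 \<subseteq> map_prod F F ` S1"
    proof clarify
      fix u v assume uv: "(u, v) \<in> S2"
      then obtain x y where "x \<in> P1" "y \<in> P1" "u = F x" "v = F y" using S2 P2 by blast
      with uv step_iff show "(u, v) \<in> map_prod F F ` S1" by force
    qed
  qed
  then have "P2 // S2\<^sup>* = image F ` (P1 // S1\<^sup>*)"
    unfolding P2 quotient_eq_image image_image using rtrancl_map_prod_Image[OF inj S1] by simp
  moreover have "inj_on (image F) (P1 // S1\<^sup>*)"
  proof (rule inj_on_subset[OF inj_on_image_Pow[OF inj]])
    show "P1 // S1\<^sup>* \<subseteq> Pow P1" using rtrancl_Image_subset[OF S1] by (auto simp: quotient_eq_image)
  qed
  ultimately show ?thesis by (simp add: card_image)
qed

definition box_product :: "('a \<times> 'a) set \<Rightarrow> ('b \<times> 'b) set \<Rightarrow> 'a set \<Rightarrow> 'b set \<Rightarrow> (('a \<times> 'b) \<times> ('a \<times> 'b)) set"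
  where "box_product S1 S2 P1 P2 =
    {((x, y), (x', y)) | x x' y. (x, x') \<in> S1 \<and> y \<in> P2} \<union> {((x, y), (x, y')) | x y y'. x \<in> P1 \<and> (y, y') \<in> S2}"

lemma rtrancl_box_product_Image:
  assumes S1: "S1 \<subseteq> P1 \<times> P1" and "x \<in> P1" "y \<in> P2"
  shows "(box_product S1 S2 P1 P2)\<^sup>* `` {(x, y)} = S1\<^sup>* `` {x} \<times> S2\<^sup>* `` {y}"
proof (intro equalityI subsetI)
  fix z assume "z \<in> (box_product S1 S2 P1 P2)\<^sup>* `` {(x, y)}"
  then have "((x, y), z) \<in> (box_product S1 S2 P1 P2)\<^sup>*" by simp
  then show "z \<in> S1\<^sup>* `` {x} \<times> S2\<^sup>* `` {y}"
    by (induction rule: rtrancl_induct) (auto simp: box_product_def intro: rtrancl_into_rtrancl)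
next
  fix z assume "z \<in> S1\<^sup>* `` {x} \<times> S2\<^sup>* `` {y}"
  then obtain u v where uv: "(x, u) \<in> S1\<^sup>*" "(y, v) \<in> S2\<^sup>*" "z = (u, v)" by auto
  have u: "u \<in> P1" using rtrancl_Image_subset[OF S1 \<open>x \<in> P1\<close>] uv(1) by blast
  have "((x, y), (u, y)) \<in> (box_product S1 S2 P1 P2)\<^sup>*" using uv(1)
    by (induction rule: rtrancl_induct) (auto simp: box_product_def \<open>y \<in> P2\<close> intro: rtrancl_into_rtrancl)
  moreover have "((u, y), (u, v)) \<in> (box_product S1 S2 P1 P2)\<^sup>*" using uv(2)
    by (induction rule: rtrancl_induct) (auto simp: box_product_def u intro: rtrancl_into_rtrancl)
  ultimately have "((x, y), (u, v)) \<in> (box_product S1 S2 P1 P2)\<^sup>*" by (rule rtrancl_trans)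
  then show "z \<in> (box_product S1 S2 P1 P2)\<^sup>* `` {(x, y)}" using uv(3) by simp
qed

lemma card_quotient_box_product:
  assumes "S1 \<subseteq> P1 \<times> P1"
  shows "card ((P1 \<times> P2) // (box_product S1 S2 P1 P2)\<^sup>*) = card (P1 // S1\<^sup>*) * card (P2 // S2\<^sup>*)"
proof -
  have "(P1 \<times> P2) // (box_product S1 S2 P1 P2)\<^sup>* =
      (case_prod (\<times>) \<circ> map_prod (\<lambda>x. S1\<^sup>* `` {x}) (\<lambda>y. S2\<^sup>* `` {y})) ` (P1 \<times> P2)"
    unfolding quotient_eq_image
  proof (rule image_cong[OF refl])
    fix z assume "z \<in> P1 \<times> P2"
    then obtain x y where "z = (x, y)" "x \<in> P1" "y \<in> P2" by blast
    then show "(box_product S1 S2 P1 P2)\<^sup>* `` {z} =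
        (case_prod (\<times>) \<circ> map_prod (\<lambda>x. S1\<^sup>* `` {x}) (\<lambda>y. S2\<^sup>* `` {y})) z"
      using rtrancl_box_product_Image[OF assms] by simp
  qed
  also have "\<dots> = case_prod (\<times>) ` ((P1 // S1\<^sup>*) \<times> (P2 // S2\<^sup>*))"
    unfolding image_comp[symmetric] quotient_eq_image by (simp add: map_prod_surj_on)
  finally have quotient_eq: "(P1 \<times> P2) // (box_product S1 S2 P1 P2)\<^sup>* = \<dots>" .
  have nonempty: "X \<noteq> {}" if "X \<in> A // S\<^sup>*" for X A and S :: "('c \<times> 'c) set"
    using that unfolding quotient_eq_image by blast
  have "inj_on (case_prod (\<times>)) ((P1 // S1\<^sup>*) \<times> (P2 // S2\<^sup>*))"
    by (rule inj_onI) (clarsimp simp: times_eq_iff dest!: nonempty)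
  then show ?thesis unfolding quotient_eq by (simp add: card_image card_cartesian_product)
qed

lemma box_product_subset:
  "S1 \<subseteq> P1 \<times> P1 \<Longrightarrow> S2 \<subseteq> P2 \<times> P2 \<Longrightarrow> box_product S1 S2 P1 P2 \<subseteq> (P1 \<times> P2) \<times> (P1 \<times> P2)"
  unfolding box_product_def by blast

lemma card_quotient_eq_card_image:
  assumes "\<And>x. x \<in> P \<Longrightarrow> R `` {x} = {y \<in> P. f y = f x}"
  shows "card (P // R) = card (f ` P)"
proof -
  have "P // R = (\<lambda>v. {y \<in> P. f y = v}) ` f ` P"
    unfolding quotient_eq_image image_image using assms by simp
  moreover have "inj_on (\<lambda>v. {y \<in> P. f y = v}) (f ` P)"
    by (rule inj_onI) blast
  ultimately show ?thesis by (simp add: card_image)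
qed

definition kempe_chain_at :: "'e set \<Rightarrow> ('e \<Rightarrow> 'v set) \<Rightarrow> ('e \<Rightarrow> nat) \<Rightarrow> nat \<Rightarrow> nat \<Rightarrow> 'e \<Rightarrow> 'e set"
  where "kempe_chain_at E ends c a b e = {e'. (e, e') \<in> (kempe_adj E ends c a b)\<^sup>*}"

definition swap_colors :: "('e \<Rightarrow> nat) \<Rightarrow> nat \<Rightarrow> nat \<Rightarrow> 'e set \<Rightarrow> 'e \<Rightarrow> nat"
  where "swap_colors c a b K = (\<lambda>e. if e \<in> K then (if c e = a then b else a) else c e)"

definition kempe_step :: "'e set \<Rightarrow> ('e \<Rightarrow> 'v set) \<Rightarrow> (('e \<Rightarrow> nat) \<times> ('e \<Rightarrow> nat)) set"
  where "kempe_step E ends = {(c, c'). c \<in> proper_3_edge_colorings E ends \<and> kempe_switch E ends c c'}"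

lemma kempe_equiv_eq: "kempe_equiv E ends = (kempe_step E ends)\<^sup>*"
  unfolding kempe_equiv_def kempe_step_def ..

lemma kempe_switch_iff:
  "kempe_switch E ends c d \<longleftrightarrow> (\<exists>a b e. a \<in> {1,2,3} \<and> b \<in> {1,2,3} \<and> a \<noteq> b \<and> e \<in> E \<and> c e \<in> {a, b} \<and>
      d = swap_colors c a b (kempe_chain_at E ends c a b e))"
  unfolding kempe_switch_def kempe_chain_def kempe_chain_at_def swap_colors_def by blast

lemma proper_3_edge_coloringsD:
  assumes "c \<in> proper_3_edge_colorings E ends"
  shows "c \<in> E \<rightarrow>\<^sub>E {1,2,3}"
    and "\<And>e e'. e \<in> E \<Longrightarrow> e' \<in> E \<Longrightarrow> e \<noteq> e' \<Longrightarrow> ends e \<inter> ends e' \<noteq> {} \<Longrightarrow> c e \<noteq> c e'"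
  using assms unfolding proper_3_edge_colorings_def by auto

lemma kempe_chain_at_self: "e \<in> kempe_chain_at E ends c a b e"
  unfolding kempe_chain_at_def by simp

lemma kempe_chain_at_subset:
  assumes "e \<in> E" shows "kempe_chain_at E ends c a b e \<subseteq> E"
proof
  fix y assume "y \<in> kempe_chain_at E ends c a b e"
  then have "(e, y) \<in> (kempe_adj E ends c a b)\<^sup>*" unfolding kempe_chain_at_def by simp
  then show "y \<in> E" using assms by (induction rule: rtrancl_induct) (auto simp: kempe_adj_def)
qed

lemma kempe_chain_at_colors:
  assumes "c e \<in> {a, b}" "y \<in> kempe_chain_at E ends c a b e"
  shows "c y \<in> {a, b}"
proof -
  have "(e, y) \<in> (kempe_adj E ends c a b)\<^sup>*" using assms(2) unfolding kempe_chain_at_def by simp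
  then show ?thesis using assms(1) by (induction rule: rtrancl_induct) (auto simp: kempe_adj_def)
qed

lemma kempe_chain_at_closed:
  assumes "y \<in> kempe_chain_at E ends c a b e" "y \<in> E" "c y \<in> {a, b}" "z \<in> E" "c z \<in> {a, b}"
    and "ends y \<inter> ends z \<noteq> {}"
  shows "z \<in> kempe_chain_at E ends c a b e"
proof -
  have "(y, z) \<in> kempe_adj E ends c a b" using assms unfolding kempe_adj_def by auto
  with assms(1) show ?thesis unfolding kempe_chain_at_def by (auto intro: rtrancl_into_rtrancl)
qed

lemma kempe_chain_at_cong:
  assumes "\<And>x. x \<in> E \<Longrightarrow> c x = c' x"
  shows "kempe_chain_at E ends c a b e = kempe_chain_at E ends c' a b e"
proof -
  have "kempe_adj E ends c a b = kempe_adj E ends c' a b" unfolding kempe_adj_def using assms by auto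
  then show ?thesis unfolding kempe_chain_at_def by simp
qed

lemma swap_colors_kempe_chain_proper:
  assumes c: "c \<in> proper_3_edge_colorings E ends" and e: "e \<in> E" "c e \<in> {a, b}"
    and ab: "a \<in> {1,2,3}" "b \<in> {1,2,3}" "a \<noteq> b"
  shows "swap_colors c a b (kempe_chain_at E ends c a b e) \<in> proper_3_edge_colorings E ends"
proof -
  let ?K = "kempe_chain_at E ends c a b e"
  have K: "y \<in> E" "c y \<in> {a, b}" if "y \<in> ?K" for y
    using kempe_chain_at_subset[OF e(1), of ends c a b] kempe_chain_at_colors[of c e a b _ E ends, OF e(2)] that
    by blast+
  have "swap_colors c a b ?K x \<noteq> swap_colors c a b ?K y"
    if xy: "x \<in> E" "y \<in> E" "x \<noteq> y" "ends x \<inter> ends y \<noteq> {}" for x y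
  proof -
    have "c x \<noteq> c y" using proper_3_edge_coloringsD(2)[OF c xy] .
    moreover have "x \<in> ?K \<longleftrightarrow> y \<in> ?K" if "c x \<in> {a, b}" "c y \<in> {a, b}"
      using kempe_chain_at_closed[of _ E ends c a b e] xy that by (metis inf_commute)
    ultimately show ?thesis using K ab(3) unfolding swap_colors_def by auto
  qed
  moreover have "swap_colors c a b ?K \<in> E \<rightarrow>\<^sub>E {1,2,3}"
    using proper_3_edge_coloringsD(1)[OF c] K ab unfolding swap_colors_def by (auto simp: PiE_iff extensional_def)
  ultimately show ?thesis unfolding proper_3_edge_colorings_def by auto
qed

lemma kempe_step_subset:
  "kempe_step E ends \<subseteq> proper_3_edge_colorings E ends \<times> proper_3_edge_colorings E ends"
  unfolding kempe_step_def kempe_switch_iff using swap_colors_kempe_chain_proper by fastforce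

section \<open>Disjoint unions\<close>

text \<open>\<open>\<psi>\<close> maps \<open>E1\<close> onto a union of connected components of the line graph of \<open>(E, ends)\<close>.\<close>

definition component_embedding ::
    "('e1 \<Rightarrow> 'e) \<Rightarrow> 'e1 set \<Rightarrow> ('e1 \<Rightarrow> 'v1 set) \<Rightarrow> 'e set \<Rightarrow> ('e \<Rightarrow> 'v set) \<Rightarrow> bool"
  where "component_embedding \<psi> E1 ends1 E ends \<longleftrightarrow> inj_on \<psi> E1 \<and> \<psi> ` E1 \<subseteq> E \<and>
    (\<forall>e\<in>E1. \<forall>e'\<in>E1. ends (\<psi> e) \<inter> ends (\<psi> e') \<noteq> {} \<longleftrightarrow> ends1 e \<inter> ends1 e' \<noteq> {}) \<and>
    (\<forall>e\<in>E1. \<forall>x\<in>E - \<psi> ` E1. ends (\<psi> e) \<inter> ends x = {})"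

lemma image_kempe_chain_at_subset:
  assumes emb: "component_embedding \<psi> E1 ends1 E ends"
  shows "\<psi> ` kempe_chain_at E1 ends1 (c \<circ> \<psi>) a b e0 \<subseteq> kempe_chain_at E ends c a b (\<psi> e0)"
proof clarify
  have sub: "\<psi> ` E1 \<subseteq> E"
    and adj: "\<And>e e'. e \<in> E1 \<Longrightarrow> e' \<in> E1 \<Longrightarrow> ends (\<psi> e) \<inter> ends (\<psi> e') \<noteq> {} \<longleftrightarrow> ends1 e \<inter> ends1 e' \<noteq> {}"
    using emb unfolding component_embedding_def by blast+
  fix z assume "z \<in> kempe_chain_at E1 ends1 (c \<circ> \<psi>) a b e0"
  then have "(e0, z) \<in> (kempe_adj E1 ends1 (c \<circ> \<psi>) a b)\<^sup>*" unfolding kempe_chain_at_def by simp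
  then have "(\<psi> e0, \<psi> z) \<in> (kempe_adj E ends c a b)\<^sup>*"
  proof (induction rule: rtrancl_induct)
    case (step u v)
    then have "(\<psi> u, \<psi> v) \<in> kempe_adj E ends c a b" using sub adj unfolding kempe_adj_def by auto
    with step.IH show ?case by (rule rtrancl_into_rtrancl)
  qed simp
  then show "\<psi> z \<in> kempe_chain_at E ends c a b (\<psi> e0)" unfolding kempe_chain_at_def by simp
qed

lemma kempe_chain_at_component_embedding:
  assumes emb: "component_embedding \<psi> E1 ends1 E ends" and e0: "e0 \<in> E1"
  shows "kempe_chain_at E ends c a b (\<psi> e0) = \<psi> ` kempe_chain_at E1 ends1 (c \<circ> \<psi>) a b e0"
proof
  have adj: "\<And>e e'. e \<in> E1 \<Longrightarrow> e' \<in> E1 \<Longrightarrow> ends (\<psi> e) \<inter> ends (\<psi> e') \<noteq> {} \<longleftrightarrow> ends1 e \<inter> ends1 e' \<noteq> {}"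
    and apart: "\<And>e x. e \<in> E1 \<Longrightarrow> x \<in> E \<Longrightarrow> x \<notin> \<psi> ` E1 \<Longrightarrow> ends (\<psi> e) \<inter> ends x = {}"
    using emb unfolding component_embedding_def by blast+
  show "kempe_chain_at E ends c a b (\<psi> e0) \<subseteq> \<psi> ` kempe_chain_at E1 ends1 (c \<circ> \<psi>) a b e0"
  proof
    fix y assume "y \<in> kempe_chain_at E ends c a b (\<psi> e0)"
    then have "(\<psi> e0, y) \<in> (kempe_adj E ends c a b)\<^sup>*" unfolding kempe_chain_at_def by simp
    then show "y \<in> \<psi> ` kempe_chain_at E1 ends1 (c \<circ> \<psi>) a b e0"
    proof (induction rule: rtrancl_induct)
      case base show ?case by (rule imageI[OF kempe_chain_at_self])
    next
      case (step y w)
      then obtain z where z: "z \<in> kempe_chain_at E1 ends1 (c \<circ> \<psi>) a b e0" "y = \<psi> z" by blast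
      have "z \<in> E1" using kempe_chain_at_subset[OF e0] z(1) by blast
      have w: "w \<in> E" "c y \<in> {a, b}" "c w \<in> {a, b}" "ends y \<inter> ends w \<noteq> {}"
        using step(2) unfolding kempe_adj_def by auto
      then obtain z' where "z' \<in> E1" "w = \<psi> z'" using apart[OF \<open>z \<in> E1\<close>] z(2) by blast
      with w z \<open>z \<in> E1\<close> adj have "(z, z') \<in> kempe_adj E1 ends1 (c \<circ> \<psi>) a b"
        unfolding kempe_adj_def by auto
      with z(1) \<open>w = \<psi> z'\<close> show ?case
        unfolding kempe_chain_at_def by (blast intro: rtrancl_into_rtrancl)
    qed
  qed
  show "\<psi> ` kempe_chain_at E1 ends1 (c \<circ> \<psi>) a b e0 \<subseteq> kempe_chain_at E ends c a b (\<psi> e0)"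
    by (rule image_kempe_chain_at_subset[OF emb])
qed

lemma swap_colors_component_embedding:
  fixes c :: "'e \<Rightarrow> nat" and a b :: nat
  assumes emb: "component_embedding \<psi> E1 ends1 E ends" and e0: "e0 \<in> E1"
  defines "K \<equiv> kempe_chain_at E ends c a b (\<psi> e0)" and "c1 \<equiv> restrict (c \<circ> \<psi>) E1"
  shows "restrict (swap_colors c a b K \<circ> \<psi>) E1 = swap_colors c1 a b (kempe_chain_at E1 ends1 c1 a b e0)"
    and "x \<notin> \<psi> ` E1 \<Longrightarrow> swap_colors c a b K x = c x"
proof -
  have inj: "inj_on \<psi> E1" using emb unfolding component_embedding_def by blast
  have K1: "kempe_chain_at E1 ends1 c1 a b e0 = kempe_chain_at E1 ends1 (c \<circ> \<psi>) a b e0"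
    unfolding c1_def by (rule kempe_chain_at_cong) simp
  have K: "K = \<psi> ` kempe_chain_at E1 ends1 c1 a b e0"
    unfolding K_def K1 using kempe_chain_at_component_embedding[OF emb e0] .
  have K1_sub: "kempe_chain_at E1 ends1 c1 a b e0 \<subseteq> E1" using kempe_chain_at_subset[OF e0] .
  have "\<psi> z \<in> K \<longleftrightarrow> z \<in> kempe_chain_at E1 ends1 c1 a b e0" if "z \<in> E1" for z
    unfolding K using inj K1_sub that by (auto dest: inj_onD)
  then show "restrict (swap_colors c a b K \<circ> \<psi>) E1 = swap_colors c1 a b (kempe_chain_at E1 ends1 c1 a b e0)"
    using K1_sub unfolding swap_colors_def c1_def by (auto simp: fun_eq_iff)
  show "x \<notin> \<psi> ` E1 \<Longrightarrow> swap_colors c a b K x = c x"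
    using K K1_sub unfolding swap_colors_def by auto
qed

lemma proper_3_edge_colorings_component_embedding:
  assumes emb: "component_embedding \<psi> E1 ends1 E ends" and c: "c \<in> proper_3_edge_colorings E ends"
  shows "restrict (c \<circ> \<psi>) E1 \<in> proper_3_edge_colorings E1 ends1"
proof -
  have inj: "inj_on \<psi> E1" and sub: "\<psi> ` E1 \<subseteq> E"
    and adj: "\<And>e e'. e \<in> E1 \<Longrightarrow> e' \<in> E1 \<Longrightarrow> ends (\<psi> e) \<inter> ends (\<psi> e') \<noteq> {} \<longleftrightarrow> ends1 e \<inter> ends1 e' \<noteq> {}"
    using emb unfolding component_embedding_def by blast+
  have "c (\<psi> e) \<noteq> c (\<psi> e')"
    if "e \<in> E1" "e' \<in> E1" "e \<noteq> e'" "ends1 e \<inter> ends1 e' \<noteq> {}" for e e'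
  proof (rule proper_3_edge_coloringsD(2)[OF c])
    show "\<psi> e \<in> E" "\<psi> e' \<in> E" using sub that by auto
    show "\<psi> e \<noteq> \<psi> e'" using inj that by (auto dest: inj_onD)
    show "ends (\<psi> e) \<inter> ends (\<psi> e') \<noteq> {}" using adj that by blast
  qed
  with proper_3_edge_coloringsD(1)[OF c] sub show ?thesis
    unfolding proper_3_edge_colorings_def by (auto simp: PiE_iff)
qed

locale disjoint_union =
  fixes V1 :: "'v1 set" and E1 :: "'e1 set" and ends1 :: "'e1 \<Rightarrow> 'v1 set"
    and V2 :: "'v2 set" and E2 :: "'e2 set" and ends2 :: "'e2 \<Rightarrow> 'v2 set"
    and V :: "'v set" and E :: "'e set" and ends :: "'e \<Rightarrow> 'v set"
    and \<psi>1 :: "'e1 \<Rightarrow> 'e" and \<psi>2 :: "'e2 \<Rightarrow> 'e" and \<phi>1 :: "'v1 \<Rightarrow> 'v" and \<phi>2 :: "'v2 \<Rightarrow> 'v"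
  assumes graph1: "graph V1 E1 ends1" and graph2: "graph V2 E2 ends2"
    and inj_\<psi>1: "inj_on \<psi>1 E1" and inj_\<psi>2: "inj_on \<psi>2 E2" and disjoint_edges: "\<psi>1 ` E1 \<inter> \<psi>2 ` E2 = {}"
    and inj_\<phi>1: "inj_on \<phi>1 V1" and inj_\<phi>2: "inj_on \<phi>2 V2" and disjoint_vertices: "\<phi>1 ` V1 \<inter> \<phi>2 ` V2 = {}"
    and edges: "E = \<psi>1 ` E1 \<union> \<psi>2 ` E2" and vertices: "V = \<phi>1 ` V1 \<union> \<phi>2 ` V2"
    and ends_\<psi>1: "\<And>e. e \<in> E1 \<Longrightarrow> ends (\<psi>1 e) = \<phi>1 ` ends1 e"
    and ends_\<psi>2: "\<And>e. e \<in> E2 \<Longrightarrow> ends (\<psi>2 e) = \<phi>2 ` ends2 e"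
begin

abbreviation "P \<equiv> proper_3_edge_colorings E ends"
abbreviation "P1 \<equiv> proper_3_edge_colorings E1 ends1"
abbreviation "P2 \<equiv> proper_3_edge_colorings E2 ends2"
abbreviation "res1 c \<equiv> restrict (c \<circ> \<psi>1) E1"
abbreviation "res2 c \<equiv> restrict (c \<circ> \<psi>2) E2"

lemma ends1_subset: "e \<in> E1 \<Longrightarrow> ends1 e \<subseteq> V1"
  using graph1 unfolding graph_def by auto

lemma ends2_subset: "e \<in> E2 \<Longrightarrow> ends2 e \<subseteq> V2"
  using graph2 unfolding graph_def by auto

lemma ends_\<psi>1_Int: "e \<in> E1 \<Longrightarrow> e' \<in> E1 \<Longrightarrow> ends (\<psi>1 e) \<inter> ends (\<psi>1 e') = \<phi>1 ` (ends1 e \<inter> ends1 e')"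
  by (simp add: ends_\<psi>1 ends1_subset inj_on_image_Int[OF inj_\<phi>1])

lemma ends_\<psi>1_\<psi>2_disjoint: "e \<in> E1 \<Longrightarrow> e' \<in> E2 \<Longrightarrow> ends (\<psi>1 e) \<inter> ends (\<psi>2 e') = {}"
  using ends_\<psi>1 ends_\<psi>2 ends1_subset ends2_subset disjoint_vertices by blast

lemma disjoint_union_swap: "disjoint_union V2 E2 ends2 V1 E1 ends1 V E ends \<psi>2 \<psi>1 \<phi>2 \<phi>1"
  by unfold_locales
    (use graph1 graph2 inj_\<psi>1 inj_\<psi>2 inj_\<phi>1 inj_\<phi>2 disjoint_edges disjoint_vertices
      edges vertices ends_\<psi>1 ends_\<psi>2 in auto)

lemma component_embedding_\<psi>1: "component_embedding \<psi>1 E1 ends1 E ends"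
  unfolding component_embedding_def
proof (intro conjI ballI)
  show "inj_on \<psi>1 E1" "\<psi>1 ` E1 \<subseteq> E" using inj_\<psi>1 edges by auto
next
  fix e e' assume "e \<in> E1" "e' \<in> E1"
  then show "ends (\<psi>1 e) \<inter> ends (\<psi>1 e') \<noteq> {} \<longleftrightarrow> ends1 e \<inter> ends1 e' \<noteq> {}"
    by (simp add: ends_\<psi>1_Int)
next
  fix e x assume "e \<in> E1" "x \<in> E - \<psi>1 ` E1"
  then show "ends (\<psi>1 e) \<inter> ends x = {}" using edges ends_\<psi>1_\<psi>2_disjoint by blast
qed

lemma edge_\<psi>1:
  assumes "e \<in> E1" shows "ends (\<psi>1 e) \<subseteq> V \<and> card (ends (\<psi>1 e)) = 2"
proof -
  have "ends1 e \<subseteq> V1" "card (ends1 e) = 2" using graph1 assms unfolding graph_def by auto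
  moreover have "card (\<phi>1 ` ends1 e) = card (ends1 e)"
    using inj_on_subset[OF inj_\<phi>1 \<open>ends1 e \<subseteq> V1\<close>] by (rule card_image)
  ultimately show ?thesis using ends_\<psi>1[OF assms] vertices by auto
qed

lemma degree_\<phi>1: "u \<in> V1 \<Longrightarrow> degree E ends (\<phi>1 u) = degree E1 ends1 u"
proof -
  assume u: "u \<in> V1"
  have "{x \<in> E. \<phi>1 u \<in> ends x} = \<psi>1 ` {e \<in> E1. u \<in> ends1 e}"
  proof (intro equalityI subsetI)
    fix x assume x: "x \<in> {x \<in> E. \<phi>1 u \<in> ends x}"
    have "x \<notin> \<psi>2 ` E2" using x u ends_\<psi>2 ends2_subset disjoint_vertices by blast
    then obtain e where "e \<in> E1" "x = \<psi>1 e" using x edges by blast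
    moreover have "u \<in> ends1 e"
      using x u ends_\<psi>1 ends1_subset inj_onD[OF inj_\<phi>1] \<open>e \<in> E1\<close> \<open>x = \<psi>1 e\<close> by fastforce
    ultimately show "x \<in> \<psi>1 ` {e \<in> E1. u \<in> ends1 e}" by blast
  qed (use edges ends_\<psi>1 in auto)
  then show ?thesis
    unfolding degree_def using inj_on_subset[OF inj_\<psi>1] by (simp add: card_image)
qed

lemma ends_\<psi>1_Int_image:
  assumes "e \<in> E1" "A1 \<subseteq> V1" "A2 \<subseteq> V2"
  shows "ends (\<psi>1 e) \<inter> (\<phi>1 ` A1 \<union> \<phi>2 ` A2) = \<phi>1 ` (ends1 e \<inter> A1)"
proof -
  have "\<phi>1 ` ends1 e \<inter> \<phi>2 ` A2 = {}" using assms ends1_subset disjoint_vertices by blast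
  moreover have "\<phi>1 ` ends1 e \<inter> \<phi>1 ` A1 = \<phi>1 ` (ends1 e \<inter> A1)"
    using assms ends1_subset by (simp add: inj_on_image_Int[OF inj_\<phi>1])
  ultimately show ?thesis by (simp add: ends_\<psi>1[OF assms(1)] Int_Un_distrib)
qed

lemma planar_part1:
  assumes "planar V E ends" shows "planar V1 E1 ends1"
proof -
  obtain f :: "'v \<Rightarrow> complex" and \<gamma> :: "'e \<Rightarrow> real \<Rightarrow> complex" where f: "inj_on f V"
    and arcs: "\<And>e. e \<in> E \<Longrightarrow> arc (\<gamma> e) \<and> {pathstart (\<gamma> e), pathfinish (\<gamma> e)} = f ` ends e \<and>
        path_image (\<gamma> e) \<inter> f ` V \<subseteq> f ` ends e"
    and crossings: "\<And>e e'. e \<in> E \<Longrightarrow> e' \<in> E \<Longrightarrow> e \<noteq> e' \<Longrightarrow>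
        path_image (\<gamma> e) \<inter> path_image (\<gamma> e') \<subseteq> f ` (ends e \<inter> ends e')"
    using assms unfolding planar_def by metis
  have V1: "\<phi>1 ` V1 \<subseteq> V" and E1: "\<psi>1 ` E1 \<subseteq> E" using vertices edges by auto
  have ends1: "(f \<circ> \<phi>1) ` ends1 e = f ` ends (\<psi>1 e)" if "e \<in> E1" for e
    using ends_\<psi>1[OF that] by (simp add: image_comp)
  show ?thesis unfolding planar_def
  proof (intro exI conjI ballI impI)
    show "inj_on (f \<circ> \<phi>1) V1" using f inj_\<phi>1 V1 by (simp add: comp_inj_on inj_on_subset)
  next
    fix e assume e: "e \<in> E1"
    then show "arc ((\<gamma> \<circ> \<psi>1) e)" "{pathstart ((\<gamma> \<circ> \<psi>1) e), pathfinish ((\<gamma> \<circ> \<psi>1) e)} = (f \<circ> \<phi>1) ` ends1 e"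
      using arcs E1 ends1 by auto
    have "path_image ((\<gamma> \<circ> \<psi>1) e) \<inter> (f \<circ> \<phi>1) ` V1 \<subseteq> path_image (\<gamma> (\<psi>1 e)) \<inter> f ` V"
      using V1 by auto
    also have "\<dots> \<subseteq> f ` ends (\<psi>1 e)" using arcs E1 e by blast
    finally show "path_image ((\<gamma> \<circ> \<psi>1) e) \<inter> (f \<circ> \<phi>1) ` V1 \<subseteq> (f \<circ> \<phi>1) ` ends1 e"
      using ends1[OF e] by simp
  next
    fix e e' assume e: "e \<in> E1" "e' \<in> E1" "e \<noteq> e'"
    then have "\<psi>1 e \<noteq> \<psi>1 e'" using inj_\<psi>1 by (auto dest: inj_onD)
    then have "path_image (\<gamma> (\<psi>1 e)) \<inter> path_image (\<gamma> (\<psi>1 e')) \<subseteq> f ` (ends (\<psi>1 e) \<inter> ends (\<psi>1 e'))"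
      using crossings E1 e by blast
    then show "path_image ((\<gamma> \<circ> \<psi>1) e) \<inter> path_image ((\<gamma> \<circ> \<psi>1) e') \<subseteq> (f \<circ> \<phi>1) ` (ends1 e \<inter> ends1 e')"
      using e by (simp add: ends_\<psi>1_Int image_comp)
  qed
qed

lemma edge_cases:
  assumes "x \<in> E"
  obtains (part1) e where "e \<in> E1" "x = \<psi>1 e" | (part2) e where "e \<in> E2" "x = \<psi>2 e"
  using assms edges by blast

lemma res1_swap_colors_at_\<psi>1:
  assumes "e \<in> E1"
  shows "res1 (swap_colors c a b (kempe_chain_at E ends c a b (\<psi>1 e))) =
    swap_colors (res1 c) a b (kempe_chain_at E1 ends1 (res1 c) a b e)"
  using swap_colors_component_embedding(1)[OF component_embedding_\<psi>1 assms] .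

lemma res2_swap_colors_at_\<psi>1:
  assumes "e \<in> E1"
  shows "res2 (swap_colors c a b (kempe_chain_at E ends c a b (\<psi>1 e))) = res2 c"
proof -
  have "\<psi>2 z \<notin> \<psi>1 ` E1" if "z \<in> E2" for z using that disjoint_edges by blast
  then show ?thesis
    using swap_colors_component_embedding(2)[OF component_embedding_\<psi>1 assms] by (auto simp: fun_eq_iff)
qed

lemma restrict_eq_imp_eq:
  assumes "c \<in> P" "d \<in> P" "res1 c = res1 d" "res2 c = res2 d"
  shows "c = d"
proof
  fix x show "c x = d x"
  proof (cases "x \<in> E")
    case True then show ?thesis
      using assms(3,4) by (cases rule: edge_cases) (metis comp_apply restrict_apply')+
  next
    case False then show ?thesis
      using PiE_arb[OF proper_3_edge_coloringsD(1)[OF assms(1)]] PiE_arb[OF proper_3_edge_coloringsD(1)[OF assms(2)]]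
      by simp
  qed
qed

lemma res1_proper: "c \<in> P \<Longrightarrow> res1 c \<in> P1"
  by (rule proper_3_edge_colorings_component_embedding[OF component_embedding_\<psi>1])

lemma kempe_step_at_\<psi>1:
  assumes c: "c \<in> P" and e: "e \<in> E1" "c (\<psi>1 e) \<in> {a, b}" and ab: "a \<in> {1,2,3}" "b \<in> {1,2,3}" "a \<noteq> b"
  defines "d \<equiv> swap_colors c a b (kempe_chain_at E ends c a b (\<psi>1 e))"
  shows "(res1 c, res1 d) \<in> kempe_step E1 ends1" and "res2 d = res2 c"
proof -
  have "kempe_switch E1 ends1 (res1 c) (res1 d)"
    unfolding kempe_switch_iff d_def res1_swap_colors_at_\<psi>1[OF e(1)] using e ab by auto
  with res1_proper[OF c] show "(res1 c, res1 d) \<in> kempe_step E1 ends1" unfolding kempe_step_def by blast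
  show "res2 d = res2 c" unfolding d_def by (rule res2_swap_colors_at_\<psi>1[OF e(1)])
qed

lemma kempe_step_lift_\<psi>1:
  assumes c: "c \<in> P" and d: "d \<in> P"
    and step: "(res1 c, res1 d) \<in> kempe_step E1 ends1" and same: "res2 d = res2 c"
  shows "(c, d) \<in> kempe_step E ends"
proof -
  obtain a b e where ab: "a \<in> {1,2,3}" "b \<in> {1,2,3}" "a \<noteq> b" and e: "e \<in> E1" "res1 c e \<in> {a, b}"
    and d1: "res1 d = swap_colors (res1 c) a b (kempe_chain_at E1 ends1 (res1 c) a b e)"
    using step unfolding kempe_step_def kempe_switch_iff by blast
  define d' where "d' = swap_colors c a b (kempe_chain_at E ends c a b (\<psi>1 e))"
  have e': "\<psi>1 e \<in> E" "c (\<psi>1 e) \<in> {a, b}" using e edges by auto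
  then have "(c, d') \<in> kempe_step E ends"
    unfolding kempe_step_def kempe_switch_iff d'_def using c ab by blast
  moreover have "d' = d"
  proof (rule restrict_eq_imp_eq[OF _ d])
    show "d' \<in> P" unfolding d'_def using swap_colors_kempe_chain_proper[OF c _ _ ab] e' by blast
    show "res1 d' = res1 d" "res2 d' = res2 d"
      unfolding d'_def res1_swap_colors_at_\<psi>1[OF e(1)] res2_swap_colors_at_\<psi>1[OF e(1)] d1 same by simp_all
  qed
  ultimately show ?thesis by simp
qed

end

context disjoint_union
begin

interpretation swap: disjoint_union V2 E2 ends2 V1 E1 ends1 V E ends \<psi>2 \<psi>1 \<phi>2 \<phi>1
  by (fact disjoint_union_swap)

definition glue :: "('e1 \<Rightarrow> nat) \<Rightarrow> ('e2 \<Rightarrow> nat) \<Rightarrow> 'e \<Rightarrow> nat"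
  where "glue c1 c2 x = (if x \<in> \<psi>1 ` E1 then c1 (inv_into E1 \<psi>1 x)
    else if x \<in> \<psi>2 ` E2 then c2 (inv_into E2 \<psi>2 x) else undefined)"

lemma glue_\<psi>1: "e \<in> E1 \<Longrightarrow> glue c1 c2 (\<psi>1 e) = c1 e"
  unfolding glue_def using inj_\<psi>1 by simp

lemma glue_\<psi>2: "e \<in> E2 \<Longrightarrow> glue c1 c2 (\<psi>2 e) = c2 e"
  unfolding glue_def using inj_\<psi>2 disjoint_edges by auto

lemma res_glue:
  assumes "c1 \<in> P1" "c2 \<in> P2"
  shows "res1 (glue c1 c2) = c1" "res2 (glue c1 c2) = c2"
  using PiE_arb[OF proper_3_edge_coloringsD(1)[OF assms(1)]] PiE_arb[OF proper_3_edge_coloringsD(1)[OF assms(2)]]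
  by (auto simp: fun_eq_iff glue_\<psi>1 glue_\<psi>2)

lemma glue_proper:
  assumes c1: "c1 \<in> P1" and c2: "c2 \<in> P2"
  shows "glue c1 c2 \<in> P"
proof -
  have "glue c1 c2 x \<in> {1,2,3}" if "x \<in> E" for x
    using that proper_3_edge_coloringsD(1)[OF c1] proper_3_edge_coloringsD(1)[OF c2]
    by (cases rule: edge_cases) (auto simp: glue_\<psi>1 glue_\<psi>2)
  moreover have "glue c1 c2 x = undefined" if "x \<notin> E" for x
    using that edges unfolding glue_def by auto
  moreover have "glue c1 c2 x \<noteq> glue c1 c2 y"
    if xy: "x \<in> E" "y \<in> E" "x \<noteq> y" "ends x \<inter> ends y \<noteq> {}" for x y
  proof -
    have 1: "c1 e \<noteq> c1 e'" if "e \<in> E1" "e' \<in> E1" "\<psi>1 e \<noteq> \<psi>1 e'" "ends (\<psi>1 e) \<inter> ends (\<psi>1 e') \<noteq> {}" for e e'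
      using proper_3_edge_coloringsD(2)[OF c1] that ends_\<psi>1_Int by fastforce
    have 2: "c2 e \<noteq> c2 e'" if "e \<in> E2" "e' \<in> E2" "\<psi>2 e \<noteq> \<psi>2 e'" "ends (\<psi>2 e) \<inter> ends (\<psi>2 e') \<noteq> {}" for e e'
      using proper_3_edge_coloringsD(2)[OF c2] that swap.ends_\<psi>1_Int by fastforce
    from xy(1) show ?thesis
    proof (cases rule: edge_cases)
      case (part1 e)
      with xy(2) show ?thesis
        by (cases rule: edge_cases) (use xy 1 ends_\<psi>1_\<psi>2_disjoint in \<open>auto simp: glue_\<psi>1\<close>)
    next
      case (part2 e)
      with xy(2) show ?thesis
        by (cases rule: edge_cases) (use xy 2 ends_\<psi>1_\<psi>2_disjoint in \<open>auto simp: glue_\<psi>2 inf_commute\<close>)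
    qed
  qed
  ultimately show ?thesis unfolding proper_3_edge_colorings_def by auto
qed

lemma bij_betw_res: "bij_betw (\<lambda>c. (res1 c, res2 c)) P (P1 \<times> P2)"
proof (rule bij_betw_imageI)
  show "inj_on (\<lambda>c. (res1 c, res2 c)) P" by (rule inj_onI) (simp add: restrict_eq_imp_eq)
  show "(\<lambda>c. (res1 c, res2 c)) ` P = P1 \<times> P2"
  proof
    show "(\<lambda>c. (res1 c, res2 c)) ` P \<subseteq> P1 \<times> P2"
      using res1_proper swap.res1_proper by blast
    show "P1 \<times> P2 \<subseteq> (\<lambda>c. (res1 c, res2 c)) ` P"
      using glue_proper res_glue by (auto intro!: image_eqI)
  qed
qed

lemma kempe_step_iff_box_product:
  assumes c: "c \<in> P" and d: "d \<in> P"
  shows "(c, d) \<in> kempe_step E ends \<longleftrightarrow>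
    ((res1 c, res2 c), (res1 d, res2 d)) \<in> box_product (kempe_step E1 ends1) (kempe_step E2 ends2) P1 P2"
proof
  assume "(c, d) \<in> kempe_step E ends"
  then obtain a b x where ab: "a \<in> {1,2,3}" "b \<in> {1,2,3}" "a \<noteq> b" and x: "x \<in> E" "c x \<in> {a, b}"
    and d_eq: "d = swap_colors c a b (kempe_chain_at E ends c a b x)"
    unfolding kempe_step_def kempe_switch_iff by blast
  from x(1) show "((res1 c, res2 c), (res1 d, res2 d)) \<in> box_product (kempe_step E1 ends1) (kempe_step E2 ends2) P1 P2"
  proof (cases rule: edge_cases)
    case (part1 e)
    then show ?thesis using kempe_step_at_\<psi>1[OF c _ _ ab] x d_eq swap.res1_proper[OF c]
      unfolding box_product_def by auto
  next
    case (part2 e)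
    then show ?thesis using swap.kempe_step_at_\<psi>1[OF c _ _ ab] x d_eq res1_proper[OF c]
      unfolding box_product_def by auto
  qed
next
  assume "((res1 c, res2 c), (res1 d, res2 d)) \<in> box_product (kempe_step E1 ends1) (kempe_step E2 ends2) P1 P2"
  then consider "(res1 c, res1 d) \<in> kempe_step E1 ends1" "res2 d = res2 c"
    | "(res2 c, res2 d) \<in> kempe_step E2 ends2" "res1 d = res1 c"
    unfolding box_product_def by auto
  then show "(c, d) \<in> kempe_step E ends"
    by cases (use kempe_step_lift_\<psi>1[OF c d] swap.kempe_step_lift_\<psi>1[OF c d] in blast)+
qed

lemma kempe_classes_3_disjoint_union:
  "kempe_classes_3 E ends = kempe_classes_3 E1 ends1 * kempe_classes_3 E2 ends2"
proof -
  have "card (P // (kempe_step E ends)\<^sup>*) =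
      card ((P1 \<times> P2) // (box_product (kempe_step E1 ends1) (kempe_step E2 ends2) P1 P2)\<^sup>*)"
    by (rule card_quotient_rtrancl_bij_betw[OF bij_betw_res kempe_step_subset
          box_product_subset[OF kempe_step_subset kempe_step_subset] kempe_step_iff_box_product])
  then show ?thesis
    unfolding kempe_classes_3_def kempe_equiv_eq card_quotient_box_product[OF kempe_step_subset] .
qed

lemma graph_disjoint_union: "graph V E ends"
proof -
  have "ends x \<subseteq> V \<and> card (ends x) = 2" if "x \<in> E" for x
    using that by (cases rule: edge_cases) (simp_all add: edge_\<psi>1 swap.edge_\<psi>1)
  moreover have "finite V" "finite E" using graph1 graph2 unfolding graph_def vertices edges by auto
  ultimately show ?thesis unfolding graph_def by blast
qed

lemma cubic_disjoint_union:
  "cubic V1 E1 ends1 \<Longrightarrow> cubic V2 E2 ends2 \<Longrightarrow> cubic V E ends"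
  unfolding cubic_def vertices using degree_\<phi>1 swap.degree_\<phi>1 by auto

lemma bipartite_disjoint_union:
  assumes "bipartite V1 E1 ends1" "bipartite V2 E2 ends2"
  shows "bipartite V E ends"
proof -
  obtain A1 A2 where A: "A1 \<subseteq> V1" "A2 \<subseteq> V2"
    and one: "\<forall>e\<in>E1. card (ends1 e \<inter> A1) = 1" "\<forall>e\<in>E2. card (ends2 e \<inter> A2) = 1"
    using assms unfolding bipartite_def by metis
  have "card (ends x \<inter> (\<phi>1 ` A1 \<union> \<phi>2 ` A2)) = 1" if "x \<in> E" for x
    using that
  proof (cases rule: edge_cases)
    case (part1 e)
    then have "inj_on \<phi>1 (ends1 e \<inter> A1)" using inj_on_subset[OF inj_\<phi>1] ends1_subset by blast
    then show ?thesis using part1 one ends_\<psi>1_Int_image[OF _ A] by (simp add: card_image)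
  next
    case (part2 e)
    then have "inj_on \<phi>2 (ends2 e \<inter> A2)" using inj_on_subset[OF inj_\<phi>2] ends2_subset by blast
    then show ?thesis using part2 one swap.ends_\<psi>1_Int_image[OF _ A(2,1)] by (simp add: card_image Un_commute)
  qed
  moreover have "\<phi>1 ` A1 \<union> \<phi>2 ` A2 \<subseteq> V" using A vertices by blast
  ultimately show ?thesis unfolding bipartite_def by blast
qed

end

section \<open>The Kempe classes of \<open>K\<^sub>3\<^sub>,\<^sub>3\<close>\<close>

text \<open>Edge \<open>3 * i + j\<close> joins vertex \<open>i\<close> to vertex \<open>3 + j\<close>, so a proper colouring is a Latin square
on the \<open>3 \<times> 3\<close> grid of edges, and two edges are adjacent iff their cells lie on a common line.\<close>

definition V33 :: "nat set" where "V33 = {..<6}"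
definition E33 :: "nat set" where "E33 = {..<9}"
definition ends33 :: "nat \<Rightarrow> nat set" where "ends33 e = {e div 3, 3 + e mod 3}"

definition same_line :: "nat \<Rightarrow> nat \<Rightarrow> bool"
  where "same_line x y \<longleftrightarrow> x div 3 = y div 3 \<or> x mod 3 = y mod 3"

lemma less_9_iff: "(x::nat) < 9 \<longleftrightarrow> x = 0 \<or> x = 1 \<or> x = 2 \<or> x = 3 \<or> x = 4 \<or> x = 5 \<or> x = 6 \<or> x = 7 \<or> x = 8"
  by arith

lemma all_less_9: "(\<forall>x<9. P x) \<longleftrightarrow> P 0 \<and> P 1 \<and> P 2 \<and> P 3 \<and> P (4::nat) \<and> P 5 \<and> P 6 \<and> P 7 \<and> P 8"
  unfolding less_9_iff by blast

lemma ex_less_9: "(\<exists>x<9. P x) \<longleftrightarrow> P 0 \<or> P 1 \<or> P 2 \<or> P 3 \<or> P (4::nat) \<or> P 5 \<or> P 6 \<or> P 7 \<or> P 8"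
  unfolding less_9_iff by blast

text \<open>If every line of the grid contains exactly two marked cells (\<open>S\<close>), the marked cells form a
6-cycle under line adjacency; hence a set \<open>R\<close> that contains one of them and is closed along lines
contains all of them.\<close>

lemma grid_two_per_line_connected:
  fixes S R :: "nat \<Rightarrow> bool"
  assumes pairs: "\<forall>x<9. \<forall>y<9. x \<noteq> y \<and> same_line x y \<longrightarrow> (S x \<or> S y) \<and> (R x \<and> S x \<and> S y \<longrightarrow> R y)"
    and triples: "\<And>x y z. x < 9 \<Longrightarrow> y < 9 \<Longrightarrow> z < 9 \<Longrightarrow> x \<noteq> y \<Longrightarrow> x \<noteq> z \<Longrightarrow> y \<noteq> z \<Longrightarrow>
      same_line x y \<Longrightarrow> same_line x z \<Longrightarrow> same_line y z \<Longrightarrow> \<not> (S x \<and> S y \<and> S z)"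
    and start: "\<exists>x<9. R x \<and> S x"
  shows "\<forall>x<9. S x \<longrightarrow> R x"
proof -
  have "\<not> (S 0 \<and> S 1 \<and> S 2)" "\<not> (S 3 \<and> S 4 \<and> S 5)" "\<not> (S 6 \<and> S 7 \<and> S 8)"
    "\<not> (S 0 \<and> S 3 \<and> S 6)" "\<not> (S 1 \<and> S 4 \<and> S 7)" "\<not> (S 2 \<and> S 5 \<and> S 8)"
    by (rule triples; simp add: same_line_def)+
  then show ?thesis
    using pairs start unfolding same_line_def all_less_9 ex_less_9 by (simp (no_asm_use)) sat
qed

abbreviation "P33 \<equiv> proper_3_edge_colorings E33 ends33"

lemma ends33_Int: "x < 9 \<Longrightarrow> y < 9 \<Longrightarrow> ends33 x \<inter> ends33 y \<noteq> {} \<longleftrightarrow> same_line x y"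
  unfolding ends33_def same_line_def by auto

lemma K33_proper_iff:
  "c \<in> P33 \<longleftrightarrow> (\<forall>x<9. c x \<in> {1,2,3}) \<and> (\<forall>x. \<not> x < 9 \<longrightarrow> c x = undefined) \<and>
    (\<forall>x<9. \<forall>y<9. x \<noteq> y \<and> same_line x y \<longrightarrow> c x \<noteq> c y)"
  unfolding proper_3_edge_colorings_def E33_def using ends33_Int
  by (auto simp: PiE_iff extensional_def)

lemma K33_properD:
  assumes "c \<in> P33"
  shows "x < 9 \<Longrightarrow> c x \<in> {1,2,3}"
    and "x < 9 \<Longrightarrow> y < 9 \<Longrightarrow> x \<noteq> y \<Longrightarrow> same_line x y \<Longrightarrow> c x \<noteq> c y"
  using assms unfolding K33_proper_iff by blast+

lemma kempe_chain_at_K33: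
  assumes c: "c \<in> P33" and ab: "a \<in> {1,2,3}" "b \<in> {1,2,3}" "a \<noteq> b" and e: "e < 9" "c e \<in> {a, b}"
  shows "kempe_chain_at E33 ends33 c a b e = {y \<in> E33. c y \<in> {a, b}}"
proof
  have "e \<in> E33" using e unfolding E33_def by simp
  then show "kempe_chain_at E33 ends33 c a b e \<subseteq> {y \<in> E33. c y \<in> {a, b}}"
    using kempe_chain_at_subset[of e E33 ends33 c a b] kempe_chain_at_colors[of c e a b _ E33 ends33] e(2)
    by auto
  define S where "S y \<longleftrightarrow> c y \<in> {a, b}" for y
  define R where "R y \<longleftrightarrow> y \<in> kempe_chain_at E33 ends33 c a b e" for y
  have no_three: "\<not> (S x \<and> S y \<and> S z)" if "x < 9" "y < 9" "z < 9" "x \<noteq> y" "x \<noteq> z" "y \<noteq> z"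
    "same_line x y" "same_line x z" "same_line y z" for x y z
  proof -
    have "c x \<noteq> c y" "c x \<noteq> c z" "c y \<noteq> c z" using K33_properD(2)[OF c] that by auto
    then show ?thesis unfolding S_def by auto
  qed
  have lines: "\<forall>x<9. \<forall>y<9. x \<noteq> y \<and> same_line x y \<longrightarrow> (S x \<or> S y) \<and> (R x \<and> S x \<and> S y \<longrightarrow> R y)"
  proof (intro allI impI, rule conjI)
    fix x y assume xy: "x < 9" "y < 9" "x \<noteq> y \<and> same_line x y"
    have "c x \<in> {1,2,3}" "c y \<in> {1,2,3}" "c x \<noteq> c y" using K33_properD[OF c] xy by auto
    then show "S x \<or> S y" using ab unfolding S_def by auto
    have "ends33 x \<inter> ends33 y \<noteq> {}" using ends33_Int[OF xy(1,2)] xy(3) by simp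
    then show "R x \<and> S x \<and> S y \<longrightarrow> R y"
      using kempe_chain_at_closed[of x E33 ends33 c a b e y] xy(1,2) unfolding R_def S_def E33_def by simp
  qed
  have "R e" unfolding R_def by (rule kempe_chain_at_self)
  then have start: "\<exists>x<9. R x \<and> S x" using e unfolding S_def by blast
  have "\<forall>x<9. S x \<longrightarrow> R x" by (rule grid_two_per_line_connected[OF lines no_three start])
  then show "{y \<in> E33. c y \<in> {a, b}} \<subseteq> kempe_chain_at E33 ends33 c a b e"
    unfolding S_def R_def E33_def by auto
qed

lemma K33_color_occurs:
  assumes c: "c \<in> P33" and "a \<in> {1,2,3}"
  obtains e where "e < 9" "c e = a"
proof -
  have "c 0 \<in> {1,2,3}" "c 1 \<in> {1,2,3}" "c 2 \<in> {1,2,3}" "c 0 \<noteq> c 1" "c 0 \<noteq> c 2" "c 1 \<noteq> c 2"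
    using K33_properD[OF c] by (auto simp: same_line_def)
  then have "c 0 = a \<or> c 1 = a \<or> c 2 = a" using assms(2) by auto
  then show thesis using that[of 0] that[of 1] that[of 2] by auto
qed

lemma kempe_step_K33_iff:
  assumes c: "c \<in> P33"
  shows "(c, d) \<in> kempe_step E33 ends33 \<longleftrightarrow>
    (\<exists>a\<in>{1,2,3}. \<exists>b\<in>{1,2,3}. a \<noteq> b \<and> d = swap_colors c a b {y \<in> E33. c y \<in> {a, b}})"
proof
  assume "(c, d) \<in> kempe_step E33 ends33"
  then obtain a b e where ab: "a \<in> {1,2,3}" "b \<in> {1,2,3}" "a \<noteq> b" and e: "e \<in> E33" "c e \<in> {a, b}"
    and d: "d = swap_colors c a b (kempe_chain_at E33 ends33 c a b e)"
    unfolding kempe_step_def kempe_switch_iff by blast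
  have "e < 9" using e(1) unfolding E33_def by simp
  then have "d = swap_colors c a b {y \<in> E33. c y \<in> {a, b}}"
    using d kempe_chain_at_K33[OF c ab _ e(2)] by simp
  with ab show "\<exists>a\<in>{1,2,3}. \<exists>b\<in>{1,2,3}. a \<noteq> b \<and> d = swap_colors c a b {y \<in> E33. c y \<in> {a, b}}"
    by blast
next
  assume "\<exists>a\<in>{1,2,3}. \<exists>b\<in>{1,2,3}. a \<noteq> b \<and> d = swap_colors c a b {y \<in> E33. c y \<in> {a, b}}"
  then obtain a b where ab: "a \<in> {1,2,3}" "b \<in> {1,2,3}" "a \<noteq> b"
    and d: "d = swap_colors c a b {y \<in> E33. c y \<in> {a, b}}" by blast
  obtain e where e: "e < 9" "c e = a" using K33_color_occurs[OF c ab(1)] .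
  then have "d = swap_colors c a b (kempe_chain_at E33 ends33 c a b e)"
    using kempe_chain_at_K33[OF c ab, of e] d by simp
  moreover have "e \<in> E33" using e unfolding E33_def by simp
  ultimately show "(c, d) \<in> kempe_step E33 ends33"
    unfolding kempe_step_def kempe_switch_iff using c ab e by blast
qed

lemma swap_colors_K33_involution:
  "a \<noteq> b \<Longrightarrow> swap_colors (swap_colors c a b {y \<in> E33. c y \<in> {a, b}}) a b
     {y \<in> E33. swap_colors c a b {y \<in> E33. c y \<in> {a, b}} y \<in> {a, b}} = c"
  unfolding swap_colors_def by (auto simp: fun_eq_iff)

lemma sym_kempe_step_K33: "sym (kempe_step E33 ends33)"
proof (rule symI)
  fix c d assume step: "(c, d) \<in> kempe_step E33 ends33"
  then have c: "c \<in> P33" and d: "d \<in> P33" using kempe_step_subset by blast+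
  from step obtain a b where ab: "a \<in> {1,2,3}" "b \<in> {1,2,3}" "a \<noteq> b"
    and d_eq: "d = swap_colors c a b {y \<in> E33. c y \<in> {a, b}}"
    unfolding kempe_step_K33_iff[OF c] by blast
  then have "c = swap_colors d a b {y \<in> E33. d y \<in> {a, b}}" using swap_colors_K33_involution[OF ab(3), of c] by simp
  with ab show "(d, c) \<in> kempe_step E33 ends33" unfolding kempe_step_K33_iff[OF d] by blast
qed

text \<open>Distinguishes the two orbits of Latin squares of order 3 under permutations of the colours.\<close>

definition K33_parity :: "(nat \<Rightarrow> nat) \<Rightarrow> bool" where "K33_parity c \<longleftrightarrow> c 1 = c 3"

lemma K33_parity_swap_colors: "K33_parity (swap_colors c a b {y \<in> E33. c y \<in> {a, b}}) = K33_parity c"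
  unfolding K33_parity_def swap_colors_def E33_def by auto

definition latin_square :: "bool \<Rightarrow> nat \<Rightarrow> nat"
  where "latin_square p x = (if x < 9 then 1 + (x mod 3 + (if p then 1 else 2) * (x div 3)) mod 3 else undefined)"

lemma latin_square_proper: "latin_square p \<in> P33"
  unfolding K33_proper_iff all_less_9 latin_square_def same_line_def by (cases p) simp_all

lemma K33_parity_latin_square: "K33_parity (latin_square p) = p"
  unfolding K33_parity_def latin_square_def by simp

lemma K33_eq_latin_square:
  assumes c: "c \<in> P33" and c01: "c 0 = 1" "c 1 = 2"
  shows "c = latin_square (K33_parity c)"
proof -
  have v: "\<And>x. x < 9 \<Longrightarrow> c x \<in> {1,2,3}"
    and ne: "\<And>x y. x < 9 \<Longrightarrow> y < 9 \<Longrightarrow> x \<noteq> y \<Longrightarrow> same_line x y \<Longrightarrow> c x \<noteq> c y"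
    using K33_properD[OF c] by blast+
  have c2: "c 2 = 3" using v[of 2] ne[of 0 2] ne[of 1 2] c01 by (auto simp: same_line_def)
  have "c x = latin_square (K33_parity c) x" if "x < 9" for x
  proof (cases "K33_parity c")
    case True
    have c3: "c 3 = 2" using True c01 unfolding K33_parity_def by simp
    have c5: "c 5 = 1" using v[of 5] ne[of 2 5] ne[of 3 5] c2 c3 by (auto simp: same_line_def)
    have c4: "c 4 = 3" using v[of 4] ne[of 3 4] ne[of 4 5] c3 c5 by (auto simp: same_line_def)
    have c6: "c 6 = 3" using v[of 6] ne[of 0 6] ne[of 3 6] c01 c3 by (auto simp: same_line_def)
    have c7: "c 7 = 1" using v[of 7] ne[of 1 7] ne[of 4 7] c01 c4 by (auto simp: same_line_def)
    have c8: "c 8 = 2" using v[of 8] ne[of 2 8] ne[of 5 8] c2 c5 by (auto simp: same_line_def)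
    show ?thesis using that c01 c2 c3 c4 c5 c6 c7 c8 True unfolding less_9_iff latin_square_def by auto
  next
    case False
    have c3: "c 3 = 3" using v[of 3] ne[of 0 3] False c01 unfolding K33_parity_def by (auto simp: same_line_def)
    have c4: "c 4 = 1" using v[of 4] ne[of 3 4] ne[of 1 4] c3 c01 by (auto simp: same_line_def)
    have c5: "c 5 = 2" using v[of 5] ne[of 3 5] ne[of 4 5] c3 c4 by (auto simp: same_line_def)
    have c6: "c 6 = 2" using v[of 6] ne[of 0 6] ne[of 3 6] c01 c3 by (auto simp: same_line_def)
    have c7: "c 7 = 3" using v[of 7] ne[of 1 7] ne[of 4 7] c01 c4 by (auto simp: same_line_def)
    have c8: "c 8 = 1" using v[of 8] ne[of 2 8] ne[of 5 8] c2 c5 by (auto simp: same_line_def)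
    show ?thesis using that c01 c2 c3 c4 c5 c6 c7 c8 False unfolding less_9_iff latin_square_def by auto
  qed
  moreover have "c x = latin_square (K33_parity c) x" if "\<not> x < 9" for x
    using c that unfolding K33_proper_iff latin_square_def by simp
  ultimately show ?thesis by blast
qed

lemma K33_recolor:
  assumes c: "c \<in> P33" and x: "x < 9" and t: "t \<in> {1,2,3}"
  obtains d where "(c, d) \<in> (kempe_step E33 ends33)\<^sup>*" "d \<in> P33" "d x = t"
    "K33_parity d = K33_parity c" "\<And>y. c y \<noteq> c x \<Longrightarrow> c y \<noteq> t \<Longrightarrow> d y = c y"
proof (cases "c x = t")
  case True
  then show ?thesis using that[of c] c by simp
next
  case False
  define d where "d = swap_colors c (c x) t {y \<in> E33. c y \<in> {c x, t}}"
  have "c x \<in> {1,2,3}" using K33_properD(1)[OF c x] .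
  then have step: "(c, d) \<in> kempe_step E33 ends33"
    unfolding kempe_step_K33_iff[OF c] d_def using t False by blast
  moreover have "d \<in> P33" using step kempe_step_subset by blast
  moreover have "d x = t" using x unfolding d_def swap_colors_def E33_def by simp
  moreover have "K33_parity d = K33_parity c" unfolding d_def by (rule K33_parity_swap_colors)
  moreover have "d y = c y" if "c y \<noteq> c x" "c y \<noteq> t" for y
    using that unfolding d_def swap_colors_def by simp
  ultimately show ?thesis using that by blast
qed

lemma K33_normalize:
  assumes c: "c \<in> P33"
  shows "(c, latin_square (K33_parity c)) \<in> (kempe_step E33 ends33)\<^sup>*"
proof -
  obtain c1 where c1: "(c, c1) \<in> (kempe_step E33 ends33)\<^sup>*" "c1 \<in> P33" "c1 0 = 1"
      "K33_parity c1 = K33_parity c"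
    using K33_recolor[OF c, of 0 1] by auto
  have "c1 1 \<noteq> c1 0" using K33_properD(2)[OF c1(2), of 1 0] by (simp add: same_line_def)
  obtain c2 where c2: "(c1, c2) \<in> (kempe_step E33 ends33)\<^sup>*" "c2 \<in> P33" "c2 1 = 2"
      "K33_parity c2 = K33_parity c1" "\<And>y. c1 y \<noteq> c1 1 \<Longrightarrow> c1 y \<noteq> 2 \<Longrightarrow> c2 y = c1 y"
    using K33_recolor[OF c1(2), of 1 2] by auto
  have "c2 0 = 1" using c2(5)[of 0] \<open>c1 1 \<noteq> c1 0\<close> c1(3) by simp
  then have "c2 = latin_square (K33_parity c)" using K33_eq_latin_square[OF c2(2) _ c2(3)] c2(4) c1(4) by simp
  with c1(1) c2(1) show ?thesis by (metis rtrancl_trans)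
qed

lemma kempe_class_K33:
  assumes c: "c \<in> P33"
  shows "(kempe_step E33 ends33)\<^sup>* `` {c} = {d \<in> P33. K33_parity d = K33_parity c}"
proof (intro equalityI subsetI)
  fix d assume "d \<in> (kempe_step E33 ends33)\<^sup>* `` {c}"
  then have "(c, d) \<in> (kempe_step E33 ends33)\<^sup>*" by simp
  then show "d \<in> {d \<in> P33. K33_parity d = K33_parity c}"
  proof (induction rule: rtrancl_induct)
    case (step d d')
    then have "d \<in> P33" "d' \<in> P33" using kempe_step_subset by blast+
    with step show ?case using kempe_step_K33_iff K33_parity_swap_colors by force
  qed (use c in simp)
next
  fix d assume "d \<in> {d \<in> P33. K33_parity d = K33_parity c}"
  then have d: "d \<in> P33" "K33_parity d = K33_parity c" by auto
  have "(d, latin_square (K33_parity c)) \<in> (kempe_step E33 ends33)\<^sup>*"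
    using K33_normalize[OF d(1)] d(2) by simp
  then have "(latin_square (K33_parity c), d) \<in> (kempe_step E33 ends33)\<^sup>*"
    by (rule symD[OF sym_rtrancl[OF sym_kempe_step_K33]])
  with K33_normalize[OF c] show "d \<in> (kempe_step E33 ends33)\<^sup>* `` {c}"
    by (simp add: rtrancl_trans)
qed

lemma kempe_classes_3_K33: "kempe_classes_3 E33 ends33 = 2"
proof -
  have "kempe_classes_3 E33 ends33 = card (K33_parity ` P33)"
    unfolding kempe_classes_3_def kempe_equiv_eq by (rule card_quotient_eq_card_image) (rule kempe_class_K33)
  also have "K33_parity ` P33 = {True, False}"
    using latin_square_proper K33_parity_latin_square by (auto intro: rev_image_eqI)
  finally show ?thesis by simp
qed

lemma graph_K33: "graph V33 E33 ends33"
  unfolding graph_def V33_def E33_def ends33_def by auto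

lemma bipartite_K33: "bipartite V33 E33 ends33"
  unfolding bipartite_def
proof (intro exI[of _ "{0,1,2}"] conjI ballI)
  show "{0,1,2} \<subseteq> V33" unfolding V33_def by auto
  fix e assume "e \<in> E33"
  then have "ends33 e \<inter> {0,1,2} = {e div 3}" unfolding E33_def ends33_def by auto
  then show "card (ends33 e \<inter> {0,1,2}) = 1" by simp
qed

lemma cubic_K33: "cubic V33 E33 ends33"
  unfolding cubic_def
proof
  fix v assume "v \<in> V33"
  then have v: "v < 6" unfolding V33_def by simp
  have "{e \<in> E33. v \<in> ends33 e} = (if v < 3 then (\<lambda>j. 3 * v + j) else (\<lambda>i. 3 * i + (v - 3))) ` {..<3}"
  proof (intro equalityI subsetI)
    fix e assume "e \<in> {e \<in> E33. v \<in> ends33 e}"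
    then have e: "e < 9" "v = e div 3 \<or> v = 3 + e mod 3" unfolding E33_def ends33_def by auto
    have e_eq: "e = 3 * (e div 3) + e mod 3" by simp
    show "e \<in> (if v < 3 then (\<lambda>j. 3 * v + j) else (\<lambda>i. 3 * i + (v - 3))) ` {..<3}"
    proof (cases "v < 3")
      case True
      then have "e = 3 * v + e mod 3" using e(2) e_eq by auto
      with True show ?thesis by (auto intro: image_eqI[of _ _ "e mod 3"])
    next
      case False
      then have "e = 3 * (e div 3) + (v - 3)" "e div 3 < 3" using e e_eq by auto
      with False show ?thesis by (auto intro: image_eqI[of _ _ "e div 3"])
    qed
  next
    fix e assume "e \<in> (if v < 3 then (\<lambda>j. 3 * v + j) else (\<lambda>i. 3 * i + (v - 3))) ` {..<3}"
    then obtain k where k: "k < 3" "e = (if v < 3 then 3 * v + k else 3 * k + (v - 3))" by auto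
    show "e \<in> {e \<in> E33. v \<in> ends33 e}"
    proof (cases "v < 3")
      case True
      then have "e div 3 = v" "e < 9" using k by auto
      then show ?thesis unfolding E33_def ends33_def by auto
    next
      case False
      then have "e = (v - 3) + 3 * k" "v - 3 < 3" using k v by auto
      then have "e mod 3 = v - 3" "e < 9" using k(1) by simp_all
      then show ?thesis using False unfolding E33_def ends33_def by auto
    qed
  qed
  moreover have "inj_on (if v < 3 then (\<lambda>j. 3 * v + j) else (\<lambda>i. 3 * i + (v - 3))) {..<3}"
    by (auto simp: inj_on_def)
  ultimately show "degree E33 ends33 v = 3" unfolding degree_def by (simp add: card_image)
qed

section \<open>Adding copies of \<open>K\<^sub>3\<^sub>,\<^sub>3\<close>\<close>

lemma kempe_classes_3_empty: "kempe_classes_3 {} ends = 1"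
proof -
  have "proper_3_edge_colorings {} ends = {\<lambda>_. undefined}"
    unfolding proper_3_edge_colorings_def by auto
  then show ?thesis unfolding kempe_classes_3_def quotient_eq_image by simp
qed

lemma disjoint_union_empty:
  fixes ends' :: "'f \<Rightarrow> 'w set"
  assumes "graph V E ends" "bij_betw \<phi> V V'" "bij_betw \<psi> E E'" "\<And>e. e \<in> E \<Longrightarrow> ends' (\<psi> e) = \<phi> ` ends e"
  shows "disjoint_union V E ends {} {} (\<lambda>_ :: nat. {} :: nat set) V' E' ends' \<psi> (\<lambda>_. undefined) \<phi> (\<lambda>_. undefined)"
  using assms by unfold_locales (auto simp: graph_def bij_betw_def)

lemma graph_isomorphism_invariants:
  fixes ends' :: "'f \<Rightarrow> 'w set"
  assumes "graph V E ends" "bij_betw \<phi> V V'" "bij_betw \<psi> E E'" "\<And>e. e \<in> E \<Longrightarrow> ends' (\<psi> e) = \<phi> ` ends e"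
  shows "graph V' E' ends'"
    and "cubic V E ends \<Longrightarrow> cubic V' E' ends'"
    and "planar V' E' ends' \<Longrightarrow> planar V E ends"
    and "bipartite V E ends \<Longrightarrow> bipartite V' E' ends'"
    and "kempe_classes_3 E' ends' = kempe_classes_3 E ends"
proof -
  note U = disjoint_union_empty[OF assms]
  show "graph V' E' ends'" by (rule disjoint_union.graph_disjoint_union[OF U])
  show "cubic V E ends \<Longrightarrow> cubic V' E' ends'"
    by (rule disjoint_union.cubic_disjoint_union[OF U]) (simp_all add: cubic_def)
  show "planar V' E' ends' \<Longrightarrow> planar V E ends" by (rule disjoint_union.planar_part1[OF U])
  show "bipartite V E ends \<Longrightarrow> bipartite V' E' ends'"
    by (rule disjoint_union.bipartite_disjoint_union[OF U]) (simp_all add: bipartite_def)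
  show "kempe_classes_3 E' ends' = kempe_classes_3 E ends"
    using disjoint_union.kempe_classes_3_disjoint_union[OF U] kempe_classes_3_empty[of "\<lambda>_ :: nat. {} :: nat set"]
    by simp
qed

text \<open>Edge \<open>m + 9 * k + e\<close> (\<open>e < 9\<close>) is edge \<open>e\<close> of the \<open>k\<close>-th copy of \<open>K\<^sub>3\<^sub>,\<^sub>3\<close>, whose
vertices are \<open>n + 6 * k + u\<close> for \<open>u < 6\<close>.\<close>

definition with_K33_copies :: "nat \<Rightarrow> nat \<Rightarrow> (nat \<Rightarrow> nat set) \<Rightarrow> nat \<Rightarrow> nat set"
  where "with_K33_copies n m ends x =
    (if x < m then ends x else (\<lambda>u. n + 6 * ((x - m) div 9) + u) ` ends33 ((x - m) mod 9))"

lemma lessThan_add_eq_Un_image: "{..<a + b} = {..<a} \<union> (\<lambda>x. a + x) ` {..<b :: nat}"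
proof (intro equalityI subsetI)
  fix x assume "x \<in> {..<a + b}"
  then have "x < a \<or> (x - a < b \<and> x = a + (x - a))" by auto
  then show "x \<in> {..<a} \<union> (\<lambda>x. a + x) ` {..<b}" by blast
qed auto

lemma disjoint_union_K33_copy:
  assumes "graph {..<n + 6 * k} {..<m + 9 * k} (with_K33_copies n m ends)"
  shows "disjoint_union {..<n + 6 * k} {..<m + 9 * k} (with_K33_copies n m ends) V33 E33 ends33
    {..<n + 6 * Suc k} {..<m + 9 * Suc k} (with_K33_copies n m ends) id (\<lambda>e. m + 9 * k + e) id (\<lambda>u. n + 6 * k + u)"
proof unfold_locales
  show "{..<m + 9 * Suc k} = id ` {..<m + 9 * k} \<union> (\<lambda>e. m + 9 * k + e) ` E33"
    unfolding E33_def using lessThan_add_eq_Un_image[of "m + 9 * k" 9] by (simp add: algebra_simps)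
  show "{..<n + 6 * Suc k} = id ` {..<n + 6 * k} \<union> (\<lambda>u. n + 6 * k + u) ` V33"
    unfolding V33_def using lessThan_add_eq_Un_image[of "n + 6 * k" 6] by (simp add: algebra_simps)
  show "with_K33_copies n m ends (m + 9 * k + e) = (\<lambda>u. n + 6 * k + u) ` ends33 e" if "e \<in> E33" for e
    using that unfolding with_K33_copies_def E33_def by simp
qed (use assms graph_K33 in \<open>auto simp: E33_def V33_def with_K33_copies_def\<close>)

lemma K33_copies:
  fixes ends :: "nat \<Rightarrow> nat set"
  assumes G: "graph {..<n} {..<m} ends"
  defines "ends' \<equiv> with_K33_copies n m ends"
  shows "graph {..<n + 6 * k} {..<m + 9 * k} ends' \<and>
    (cubic {..<n} {..<m} ends \<longrightarrow> cubic {..<n + 6 * k} {..<m + 9 * k} ends') \<and>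
    (planar {..<n + 6 * k} {..<m + 9 * k} ends' \<longrightarrow> planar {..<n} {..<m} ends) \<and>
    (bipartite {..<n} {..<m} ends \<longrightarrow> bipartite {..<n + 6 * k} {..<m + 9 * k} ends') \<and>
    kempe_classes_3 {..<m + 9 * k} ends' = 2 ^ k * kempe_classes_3 {..<m} ends"
proof (induction k)
  case 0
  have "ends' (id e) = id ` ends e" if "e \<in> {..<m}" for e
    using that unfolding ends'_def with_K33_copies_def by simp
  from graph_isomorphism_invariants[OF G bij_betw_id bij_betw_id this] show ?case by simp
next
  case (Suc k)
  interpret disjoint_union "{..<n + 6 * k}" "{..<m + 9 * k}" ends' V33 E33 ends33
    "{..<n + 6 * Suc k}" "{..<m + 9 * Suc k}" ends' id "\<lambda>e. m + 9 * k + e" id "\<lambda>u. n + 6 * k + u"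
    using disjoint_union_K33_copy Suc.IH unfolding ends'_def by blast
  show ?case
    using Suc.IH graph_disjoint_union cubic_disjoint_union[OF _ cubic_K33] planar_part1
      bipartite_disjoint_union[OF _ bipartite_K33] kempe_classes_3_disjoint_union kempe_classes_3_K33
    by auto
qed

theorem theorem23:
  fixes V :: "'v set" and E :: "'e set" and ends :: "'e \<Rightarrow> 'v set" and n :: nat
  assumes "simple_graph V E ends"
    and "cubic V E ends"
    and "\<not> planar V E ends"
    and "card V = n"
  shows "\<exists>(Vk :: nat \<Rightarrow> nat set) (Ek :: nat \<Rightarrow> nat set) (endsk :: nat \<Rightarrow> nat \<Rightarrow> nat set).
           (\<forall>k\<ge>1. graph (Vk k) (Ek k) (endsk k) \<and> cubic (Vk k) (Ek k) (endsk k) \<and>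
                   \<not> planar (Vk k) (Ek k) (endsk k) \<and> card (Vk k) = 6 * k + n \<and>
                   kempe_classes_3 (Ek k) (endsk k) = 2 ^ k * kempe_classes_3 E ends) \<and>
           (bipartite V E ends \<longrightarrow> (\<forall>k\<ge>1. bipartite (Vk k) (Ek k) (endsk k)))"
proof -
  have G: "graph V E ends" using assms(1) unfolding simple_graph_def by simp
  then have "finite V" "finite E" unfolding graph_def by auto
  then obtain \<phi> \<psi> where \<phi>: "bij_betw \<phi> V {..<n}" and \<psi>: "bij_betw \<psi> E {..<card E}"
    using ex_bij_betw_finite_nat assms(4) by (metis lessThan_atLeast0)
  define ends' where "ends' x = \<phi> ` ends (inv_into E \<psi> x)" for x
  have "ends' (\<psi> e) = \<phi> ` ends e" if "e \<in> E" for e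
    using that \<psi> unfolding ends'_def bij_betw_def by simp
  note G' = graph_isomorphism_invariants[OF G \<phi> \<psi> this]
  note copies = K33_copies[OF G'(1)]
  show ?thesis
  proof (intro exI conjI allI impI)
    fix k :: nat
    show "graph {..<n + 6 * k} {..<card E + 9 * k} (with_K33_copies n (card E) ends')"
      "cubic {..<n + 6 * k} {..<card E + 9 * k} (with_K33_copies n (card E) ends')"
      "\<not> planar {..<n + 6 * k} {..<card E + 9 * k} (with_K33_copies n (card E) ends')"
      "card {..<n + 6 * k} = 6 * k + n"
      "kempe_classes_3 {..<card E + 9 * k} (with_K33_copies n (card E) ends') = 2 ^ k * kempe_classes_3 E ends"
      using copies[of k] G' assms(2,3) by auto
    assume "bipartite V E ends"
    then show "bipartite {..<n + 6 * k} {..<card E + 9 * k} (with_K33_copies n (card E) ends')"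
      using copies[of k] G' by auto
  qed
qed

end
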